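(* For $i=1,2$ let $\delta_i:[0,1]\to[0,1]$ be the diagonal section of some 2-copula such that $t\mapsto\delta_i(t)/t$ is increasing on $(0,1]$ and $t\mapsto\delta_i(t)/t^2$ is decreasing on $(0,1]$, and let $C_i(u_1,u_2)=\min(u_1,u_2)\,\delta_i(\max(u_1,u_2))/\max(u_1,u_2)$ (with $C_i(0,0)=0$) be the corresponding semilinear copulas. If $C_1<_{TD}C_2$, then $C_1\le_{loc}C_2$.
   Context: A 2-copula is a grounded, 2-increasing function $C:[0,1]^2\to[0,1]$ with uniform margins; its diagonal section is $\delta(t)=C(t,t)$. Under the stated monotonicity conditions, the semilinear function $C_i$ is a 2-copula with diagonal $\delta_i$, and it admits the tail dependence function $\Lambda(\boldsymbol w;C_i)=\min(w_1,w_2)\lim_{t\searrow0}\delta_i(t)/t$. In general $\Lambda(\boldsymbol w;C)=\lim_{s\searrow0}C(s\boldsymbol w)/s$. $C_1<_{TD}C_2$ means $\Lambda(\boldsymbol w;C_1)<\Lambda(\boldsymbol w;C_2)$ for all $\boldsymbol w\in(0,\infty)^2$. $C_1\le_{loc}C_2$ means there is $\varepsilon>0$ with $C_1\le C_2$ on $B_\varepsilon(\boldsymbol 0)\cap[0,1]^2$ (Euclidean ball). *)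

theory Defs
  imports "HOL-Analysis.Analysis"
begin

text \<open>A 2-copula, considered as a function on [0,1]^2 (values outside are irrelevant).\<close>
definition copula2 :: "(real \<Rightarrow> real \<Rightarrow> real) \<Rightarrow> bool" where
  "copula2 C \<longleftrightarrow>
     (\<forall>u v. 0 \<le> u \<and> u \<le> 1 \<and> 0 \<le> v \<and> v \<le> 1 \<longrightarrow> 0 \<le> C u v \<and> C u v \<le> 1) \<and>
     (\<forall>u. 0 \<le> u \<and> u \<le> 1 \<longrightarrow> C u 0 = 0 \<and> C 0 u = 0) \<and>
     (\<forall>u. 0 \<le> u \<and> u \<le> 1 \<longrightarrow> C u 1 = u \<and> C 1 u = u) \<and>
     (\<forall>u1 u2 v1 v2. 0 \<le> u1 \<and> u1 \<le> u2 \<and> u2 \<le> 1 \<and> 0 \<le> v1 \<and> v1 \<le> v2 \<and> v2 \<le> 1 \<longrightarrow>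
        C u2 v2 - C u2 v1 - C u1 v2 + C u1 v1 \<ge> 0)"

definition is_copula_diagonal :: "(real \<Rightarrow> real) \<Rightarrow> bool" where
  "is_copula_diagonal \<delta> \<longleftrightarrow> (\<exists>C. copula2 C \<and> (\<forall>t. 0 \<le> t \<and> t \<le> 1 \<longrightarrow> \<delta> t = C t t))"

definition semilinear :: "(real \<Rightarrow> real) \<Rightarrow> real \<Rightarrow> real \<Rightarrow> real" where
  "semilinear \<delta> u v = (if max u v = 0 then 0 else min u v * \<delta> (max u v) / max u v)"

definition has_tdf_value :: "(real \<Rightarrow> real \<Rightarrow> real) \<Rightarrow> real \<Rightarrow> real \<Rightarrow> real \<Rightarrow> bool" where
  "has_tdf_value C w1 w2 L \<longleftrightarrow> ((\<lambda>s. C (s * w1) (s * w2) / s) \<longlongrightarrow> L) (at_right 0)"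

definition td_less :: "(real \<Rightarrow> real \<Rightarrow> real) \<Rightarrow> (real \<Rightarrow> real \<Rightarrow> real) \<Rightarrow> bool" where
  "td_less C1 C2 \<longleftrightarrow> (\<forall>w1 w2. 0 < w1 \<and> 0 < w2 \<longrightarrow>
      (\<exists>L1 L2. has_tdf_value C1 w1 w2 L1 \<and> has_tdf_value C2 w1 w2 L2 \<and> L1 < L2))"

definition loc_le :: "(real \<Rightarrow> real \<Rightarrow> real) \<Rightarrow> (real \<Rightarrow> real \<Rightarrow> real) \<Rightarrow> bool" where
  "loc_le C1 C2 \<longleftrightarrow> (\<exists>\<epsilon>>0. \<forall>u v. 0 \<le> u \<and> u \<le> 1 \<and> 0 \<le> v \<and> v \<le> 1 \<and>
      norm (u, v) < \<epsilon> \<longrightarrow> C1 u v \<le> C2 u v)"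

end

theory Submission
  imports Defs
begin

text \<open>On the diagonal the semilinear copula reduces to \<open>\<delta>\<close>, so the tail dependence function of
  \<open>semilinear \<delta>\<close> at \<open>(1,1)\<close> is \<open>lim\<^sub>t\<^sub>\<rightarrow>\<^sub>0 \<delta> t / t\<close>. Strict inequality of these limits forces
  \<open>\<delta>\<^sub>1 t / t < \<delta>\<^sub>2 t / t\<close> for all small \<open>t\<close>, and multiplying by \<open>min u v\<close> at \<open>t = max u v\<close>
  compares the two copulas near the origin.\<close>

lemma has_tdf_value_semilinear_diagonal_iff:
  "has_tdf_value (semilinear \<delta>) 1 1 L \<longleftrightarrow> ((\<lambda>t. \<delta> t / t) \<longlongrightarrow> L) (at_right 0)"
proof -
  have "\<forall>\<^sub>F t in at_right 0. semilinear \<delta> (t * 1) (t * 1) / t = \<delta> t / t"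
    using eventually_at_right_less[of "0::real"] by eventually_elim (simp add: semilinear_def)
  then show ?thesis
    unfolding has_tdf_value_def by (rule tendsto_cong)
qed

lemma semilinear_mono_diagonal_ratio:
  assumes ratio_le: "\<And>t. 0 < t \<Longrightarrow> t < b \<Longrightarrow> \<delta>1 t / t \<le> \<delta>2 t / t"
    and "0 \<le> u" "0 \<le> v" "max u v < b"
  shows "semilinear \<delta>1 u v \<le> semilinear \<delta>2 u v"
proof (cases "max u v = 0")
  case True
  then show ?thesis by (simp add: semilinear_def)
next
  case False
  with assms have "\<delta>1 (max u v) / max u v \<le> \<delta>2 (max u v) / max u v"
    by (intro ratio_le) auto
  then have "min u v * (\<delta>1 (max u v) / max u v) \<le> min u v * (\<delta>2 (max u v) / max u v)"
    using assms by (intro mult_left_mono) auto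
  with False show ?thesis by (simp add: semilinear_def)
qed

lemma loc_le_semilinear_if_eventually_diagonal_ratio_le:
  assumes "\<forall>\<^sub>F t in at_right 0. \<delta>1 t / t \<le> \<delta>2 t / t"
  shows "loc_le (semilinear \<delta>1) (semilinear \<delta>2)"
proof -
  obtain b :: real where "b > 0" and ratio_le: "\<And>t. 0 < t \<Longrightarrow> t < b \<Longrightarrow> \<delta>1 t / t \<le> \<delta>2 t / t"
    using assms unfolding eventually_at_right[OF zero_less_one] by auto
  have "semilinear \<delta>1 u v \<le> semilinear \<delta>2 u v"
    if "0 \<le> u" "0 \<le> v" "norm (u, v) < b" for u v
  proof (rule semilinear_mono_diagonal_ratio[OF ratio_le])
    have "norm u \<le> norm (u, v)" "norm v \<le> norm (u, v)"
      by (rule norm_fst_le, rule norm_snd_le)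
    with that show "max u v < b" by auto
  qed (use that in auto)
  with \<open>b > 0\<close> show ?thesis
    unfolding loc_le_def by blast
qed

theorem mainTheorem8:
  fixes \<delta>1 \<delta>2 :: "real \<Rightarrow> real"
  assumes d1: "is_copula_diagonal \<delta>1"
    and d2: "is_copula_diagonal \<delta>2"
    and inc1: "\<forall>s t. 0 < s \<and> s \<le> t \<and> t \<le> 1 \<longrightarrow> \<delta>1 s / s \<le> \<delta>1 t / t"
    and inc2: "\<forall>s t. 0 < s \<and> s \<le> t \<and> t \<le> 1 \<longrightarrow> \<delta>2 s / s \<le> \<delta>2 t / t"
    and dec1: "\<forall>s t. 0 < s \<and> s \<le> t \<and> t \<le> 1 \<longrightarrow> \<delta>1 t / t\<^sup>2 \<le> \<delta>1 s / s\<^sup>2"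
    and dec2: "\<forall>s t. 0 < s \<and> s \<le> t \<and> t \<le> 1 \<longrightarrow> \<delta>2 t / t\<^sup>2 \<le> \<delta>2 s / s\<^sup>2"
    and td: "td_less (semilinear \<delta>1) (semilinear \<delta>2)"
  shows "loc_le (semilinear \<delta>1) (semilinear \<delta>2)"
proof -
  obtain L1 L2 where "has_tdf_value (semilinear \<delta>1) 1 1 L1"
    and "has_tdf_value (semilinear \<delta>2) 1 1 L2" and "L1 < L2"
    using td unfolding td_less_def by (meson zero_less_one)
  then have "((\<lambda>t. \<delta>2 t / t - \<delta>1 t / t) \<longlongrightarrow> L2 - L1) (at_right 0)" and "0 < L2 - L1"
    by (auto intro: tendsto_diff simp: has_tdf_value_semilinear_diagonal_iff)
  then have "\<forall>\<^sub>F t in at_right 0. 0 < \<delta>2 t / t - \<delta>1 t / t"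
    by (rule order_tendstoD(1))
  then have "\<forall>\<^sub>F t in at_right 0. \<delta>1 t / t \<le> \<delta>2 t / t"
    by eventually_elim simp
  then show ?thesis
    by (rule loc_le_semilinear_if_eventually_diagonal_ratio_le)
qed

end
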